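(* Let $G$ be a simple complex Lie group with Lie algebra $\mathfrak g$, $\rho\colon G\to\mathrm{GL}(V)$ a faithful irreducible finite-dimensional complex representation with differential $\rho_*$, $T$ a maximal torus of $G$ with Lie algebra $\mathfrak t$. Suppose $g\in T$ and $x\in\mathfrak t$ satisfy $\rho(g)=\rho_*(x)$ in $\mathrm{End}(V)$. Let $e_1,\dots,e_n$ be a basis of $V$ of $T$-weight vectors with characters $\chi_1,\dots,\chi_n\in X^*(T)$. If $\chi_i\chi_j=\chi_k\chi_l$ for four of these characters, then, as polynomials in $z$, $$(z-\chi_i(g))(z-\chi_j(g))=(z-\chi_k(g))(z-\chi_l(g)).$$
   Context: Each character $\chi\in X^*(T)$ is identified with the linear form $t^*\in\mathfrak t^*$ satisfying $\chi(\exp(y))=\exp(t^*(y))$ for all $y\in\mathfrak t$. *)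

theory Defs
  imports "HOL-Analysis.Analysis" "HOL-Computational_Algebra.Polynomial"
begin

text \<open>Model of a complex torus T of rank CARD('r): T = (C^*)^r inside complex^'r,
  with Lie algebra t = complex^'r and exponential map applied componentwise.\<close>

definition torus :: "(complex ^ 'r) set" where
  "torus = {t. \<forall>a. t $ a \<noteq> 0}"

definition texp :: "complex ^ 'r \<Rightarrow> complex ^ 'r" where
  "texp y = (\<chi> a. exp (y $ a))"

text \<open>Characters of T: X^*(T) = Z^r, the character with exponent vector w.\<close>

definition character :: "int ^ 'r \<Rightarrow> complex ^ 'r \<Rightarrow> complex" where
  "character w t = (\<Prod>a\<in>UNIV. (t $ a) powi (w $ a))"

text \<open>The linear form on t identified with the character w
  (character w (texp y) = exp (char_form w y)).\<close>

definition char_form :: "int ^ 'r \<Rightarrow> complex ^ 'r \<Rightarrow> complex" where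
  "char_form w y = (\<Sum>a\<in>UNIV. of_int (w $ a) * y $ a)"

end

theory Submission
  imports Defs
begin

text \<open>A weight vector \<open>e\<^sub>m\<close> is an eigenvector of every \<open>\<rho>(t)\<close>, \<open>t \<in> T\<close>, with eigenvalue
  \<open>\<chi>\<^sub>m(t)\<close>; differentiating along \<open>s \<mapsto> exp(s y)\<close> makes it an eigenvector of \<open>\<rho>\<^sub>*(y)\<close> with
  eigenvalue the linear form \<open>t\<^sub>m\<^sup>*(y)\<close> of \<open>\<chi>\<^sub>m\<close>. As \<open>\<rho>(g) = \<rho>\<^sub>*(x)\<close>, this gives \<open>\<chi>\<^sub>m(g) = t\<^sub>m\<^sup>*(x)\<close>.
  Differentiating \<open>\<chi>\<^sub>i\<chi>\<^sub>j = \<chi>\<^sub>k\<chi>\<^sub>l\<close> along the same lines yields \<open>t\<^sub>i\<^sup>* + t\<^sub>j\<^sup>* = t\<^sub>k\<^sup>* + t\<^sub>l\<^sup>*\<close>, so the roots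
  of the two monic quadratics have equal sums as well as equal products.\<close>

lemma texp_in_torus: "texp y \<in> torus"
  by (simp add: torus_def texp_def)

lemma character_texp: "character w (texp y) = exp (char_form w y)"
  by (simp add: character_def texp_def char_form_def exp_power_int exp_sum)

lemma char_form_scale: "char_form w (c *s y) = c * char_form w y"
  by (simp add: char_form_def sum_distrib_left algebra_simps)

lemma column_nonzero_if_invertible:
  fixes E :: "'a::field ^ 'n ^ 'n"
  assumes "invertible E"
  shows "column m E \<noteq> 0"
  using assms det_zero_column(2) invertible_det_nz by blast

lemma bounded_linear_matrix_vector_mult_left:
  "bounded_linear (\<lambda>M::complex ^ 'n ^ 'm. M *v c)"
proof -
  have "linear (\<lambda>M::complex ^ 'n ^ 'm. M *v c)"
    by (rule linearI)
      (simp_all add: vec_eq_iff matrix_vector_mult_def sum.distrib distrib_right scaleR_sum_right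
        vector_scaleR_component)
  then show ?thesis
    by (simp add: linear_conv_bounded_linear)
qed

lemma has_vector_derivative_exp_line:
  "((\<lambda>s::real. exp (of_real s * L) * (c::complex)) has_vector_derivative L * c) (at 0)"
proof -
  have "((\<lambda>z. exp (z * L) * c) has_field_derivative L * c) (at (of_real 0))"
    by (auto intro!: derivative_eq_intros)
  then show ?thesis
    by (rule has_vector_derivative_real_field)
qed

lemma exp_line_eq_imp_eq:
  fixes a b :: complex
  assumes "\<And>s::real. exp (of_real s * a) = exp (of_real s * b)"
  shows "a = b"
proof -
  have "((\<lambda>s::real. exp (of_real s * a) * 1) has_vector_derivative b * 1) (at 0)"
    using has_vector_derivative_exp_line[of b 1] by (simp add: assms)
  then show ?thesis
    using vector_derivative_unique_at[OF has_vector_derivative_exp_line[of a 1]] by simp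
qed

lemma eigenvector_of_derivative:
  fixes M :: "real \<Rightarrow> complex ^ 'n ^ 'n"
  assumes M': "(M has_vector_derivative D) (at 0)"
    and eigen: "\<And>s. M s *v c = exp (of_real s * L) *s c"
  shows "D *v c = L *s c"
proof (subst vec_eq_iff, intro allI)
  fix a
  have "((\<lambda>s. (M s *v c) $ a) has_vector_derivative (D *v c) $ a) (at 0)"
    using bounded_linear.has_vector_derivative[OF
        bounded_linear_compose[OF bounded_linear_vec_nth bounded_linear_matrix_vector_mult_left] M']
    by simp
  moreover have "((\<lambda>s. (M s *v c) $ a) has_vector_derivative L * c $ a) (at 0)"
    using has_vector_derivative_exp_line[of L "c $ a"] by (simp add: eigen)
  ultimately show "(D *v c) $ a = (L *s c) $ a"
    using vector_derivative_unique_at by fastforce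
qed

lemma differential_weight_vector:
  fixes \<rho> \<rho>\<^sub>s :: "complex ^ 'r \<Rightarrow> complex ^ 'n ^ 'n"
  assumes weight: "\<forall>t\<in>torus. \<rho> t *v c = character \<mu> t *s c"
    and diff: "((\<lambda>s::real. \<rho> (texp (of_real s *s y))) has_vector_derivative \<rho>\<^sub>s y) (at 0)"
  shows "\<rho>\<^sub>s y *v c = char_form \<mu> y *s c"
  using diff by (rule eigenvector_of_derivative)
    (simp add: weight texp_in_torus character_texp char_form_scale)

lemma char_form_add_eq_if_character_mult_eq:
  assumes "\<forall>t\<in>torus. character \<mu> t * character \<nu> t = character \<mu>' t * character \<nu>' t"
  shows "char_form \<mu> y + char_form \<nu> y = char_form \<mu>' y + char_form \<nu>' y"
proof (rule exp_line_eq_imp_eq)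
  fix s :: real
  show "exp (of_real s * (char_form \<mu> y + char_form \<nu> y))
      = exp (of_real s * (char_form \<mu>' y + char_form \<nu>' y))"
    using assms[rule_format, OF texp_in_torus[of "of_real s *s y"]]
    by (simp add: character_texp char_form_scale distrib_left exp_add)
qed

lemma monic_quadratic_eqI:
  fixes a b c d :: "'a::comm_ring_1"
  assumes "a + b = c + d" and "a * b = c * d"
  shows "[:- a, 1:] * [:- b, 1:] = [:- c, 1:] * [:- d, 1:]"
  using assms by (simp add: algebra_simps)

theorem lemma3:
  fixes \<rho> :: "complex ^ 'r \<Rightarrow> complex ^ 'n ^ 'n"
    and \<rho>\<^sub>s :: "complex ^ 'r \<Rightarrow> complex ^ 'n ^ 'n"
    and E :: "complex ^ 'n ^ 'n"
    and w :: "'n \<Rightarrow> int ^ 'r"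
    and g x :: "complex ^ 'r"
    and i j k l :: 'n
  assumes hom: "\<forall>s\<in>torus. \<forall>t\<in>torus. \<rho> (s * t) = \<rho> s ** \<rho> t"
    and unit: "\<rho> 1 = mat 1"
    and basis: "invertible E"
    and weight: "\<forall>t\<in>torus. \<forall>m. \<rho> t *v column m E = character (w m) t *s column m E"
    and diff: "\<forall>y. ((\<lambda>s::real. \<rho> (texp (of_real s *s y))) has_vector_derivative \<rho>\<^sub>s y) (at 0)"
    and g: "g \<in> torus"
    and eq: "\<rho> g = \<rho>\<^sub>s x"
    and chars: "\<forall>t\<in>torus. character (w i) t * character (w j) t
                          = character (w k) t * character (w l) t"
  shows "[:- character (w i) g, 1:] * [:- character (w j) g, 1:]
       = [:- character (w k) g, 1:] * [:- character (w l) g, 1:]"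
proof -
  have eigenvalue: "character (w m) g = char_form (w m) x" for m
  proof -
    have "character (w m) g *s column m E = char_form (w m) x *s column m E"
      using weight g eq differential_weight_vector[of \<rho> "column m E" "w m" x \<rho>\<^sub>s] diff by auto
    then show ?thesis
      using column_nonzero_if_invertible[OF basis] by simp
  qed
  have "char_form (w i) x + char_form (w j) x = char_form (w k) x + char_form (w l) x"
    using chars by (rule char_form_add_eq_if_character_mult_eq)
  moreover have "character (w i) g * character (w j) g = character (w k) g * character (w l) g"
    using chars g by blast
  ultimately show ?thesis
    by (intro monic_quadratic_eqI) (simp_all add: eigenvalue)
qed

end
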